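(* Let $\alpha>0$. Then at least one of the following two statements fails: (A) $\delta_{\min,1}^{(\alpha)}(N)\le \frac{1}{N\log N}$ for infinitely many integers $N$; (B) $\delta_{\min,2}^{(\alpha)}(N)\ge \frac{1}{N(\log N)^{2/3}}$ for all sufficiently large integers $N$.
   Context: For $\alpha>0$, let $0<\lambda_1<\lambda_2<\cdots$ be the distinct values of $\alpha m^2+n^2$ with integers $m,n\ge1$, listed in increasing order. For $N\ge 3$ and $k\ge1$, let $\delta_{\min,k}^{(\alpha)}(N)$ be the $k$-th smallest among the gaps $\lambda_{i+1}-\lambda_i$, $1\le i<N$ (counted with multiplicity); in particular $\delta_{\min,1}^{(\alpha)}(N)=\min\{\lambda_{i+1}-\lambda_i:1\le i<N\}$. (Statements (A) and (B) are the properties that a Poisson random sequence satisfies almost surely.) *)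

theory Defs
  imports Complex_Main
begin

definition spec_vals :: "real \<Rightarrow> real set" where
  "spec_vals \<alpha> = {\<alpha> * (real m)^2 + (real n)^2 | m n :: nat. m \<ge> 1 \<and> n \<ge> 1}"

definition lam :: "real \<Rightarrow> nat \<Rightarrow> real" where
  "lam \<alpha> i = (THE x. x \<in> spec_vals \<alpha> \<and> card {y \<in> spec_vals \<alpha>. y < x} = i - 1)"

definition delta_min :: "real \<Rightarrow> nat \<Rightarrow> nat \<Rightarrow> real" where
  "delta_min \<alpha> k N = sort (map (\<lambda>i. lam \<alpha> (Suc i) - lam \<alpha> i) [1..<N]) ! (k - 1)"

end

theory Submission
  imports Defs "HOL-Real_Asymp.Real_Asymp"
begin

text \<open>
  For rational \<open>\<alpha>\<close> with denominator \<open>b\<close> all values lie in \<open>(1/b)\<int>\<close>, so every gap is at least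
  \<open>1/b\<close> and (A) fails. For irrational \<open>\<alpha>\<close> the value set is invariant under multiplication
  by 4 (double \<open>m\<close> and \<open>n\<close>): a gap \<open>d = \<lambda>\<^sub>i\<^sub>+\<^sub>1 - \<lambda>\<^sub>i\<close> produces a second gap of length at
  most \<open>4d\<close> starting at \<open>4\<lambda>\<^sub>i\<close>. Both occur among the first \<open>N'\<close> values, \<open>N' - 1\<close> being the number of values
  up to \<open>4\<lambda>\<^sub>i\<^sub>+\<^sub>1\<close>. Irrationality makes \<open>(m, n) \<mapsto> \<alpha>m\<^sup>2 + n\<^sup>2\<close> injective, so counting values
  is counting lattice points, and halving coordinates shows that quadrupling the bound multiplies
  the count by at most a constant; hence \<open>N' \<le> cN\<close>. If \<open>d \<le> 1/(N log N)\<close>, (B) at \<open>N'\<close> would give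
  \<open>1/(cN (log cN)\<^sup>2\<^sup>/\<^sup>3) \<le> 4/(N log N)\<close>, which fails for large \<open>N\<close>. Very small gaps occur only high
  up in the spectrum, which makes \<open>N'\<close> as large as (B) requires.
\<close>

section \<open>Enumerating a discrete set bounded below\<close>

definition rank :: "'a :: linorder set \<Rightarrow> 'a \<Rightarrow> nat" where
  "rank S x = card {y\<in>S. y < x}"

definition nth_elem :: "'a :: linorder set \<Rightarrow> nat \<Rightarrow> 'a" where
  "nth_elem S k = (THE x. x \<in> S \<and> rank S x = k)"

definition gap :: "'a :: {linorder, minus} set \<Rightarrow> nat \<Rightarrow> 'a" where
  "gap S k = nth_elem S (Suc k) - nth_elem S k"

locale lower_finite =
  fixes S :: "'a :: linordered_field set"
  assumes finite_le: "finite {y\<in>S. y \<le> x}"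
    and infinite_S: "infinite S"
begin

lemma finite_less: "finite {y\<in>S. y < x}"
  by (rule finite_subset[OF _ finite_le[of x]]) auto

lemma rank_mono: "x \<le> y \<Longrightarrow> rank S x \<le> rank S y"
  unfolding rank_def by (rule card_mono[OF finite_less]) auto

lemma rank_strict_mono: "x \<in> S \<Longrightarrow> x < y \<Longrightarrow> rank S x < rank S y"
  unfolding rank_def by (rule psubset_card_mono[OF finite_less]) auto

lemma inj_on_rank: "inj_on (rank S) S"
  by (rule inj_onI) (metis linorder_neqE rank_strict_mono less_irrefl)

lemma card_le_eq_Suc_rank: "x \<in> S \<Longrightarrow> card {y\<in>S. y \<le> x} = Suc (rank S x)"
proof -
  assume "x \<in> S"
  then have "{y\<in>S. y \<le> x} = insert x {y\<in>S. y < x}" by auto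
  then show ?thesis unfolding rank_def using finite_less by simp
qed

lemma ex_least:
  assumes "A \<subseteq> S" "a \<in> A"
  shows "\<exists>m\<in>A. \<forall>z\<in>A. m \<le> z"
proof -
  let ?T = "{y\<in>A. y \<le> a}"
  have "finite ?T" using assms(1) by (auto intro: finite_subset[OF _ finite_le[of a]])
  moreover have "a \<in> ?T" using assms(2) by simp
  ultimately have "Min ?T \<in> ?T" "\<forall>z\<in>?T. Min ?T \<le> z" using Min_in by auto
  then show ?thesis by force
qed

lemma ex_greater: "\<exists>y\<in>S. x < y"
  using infinite_S finite_le[of x] by (metis (mono_tags, lifting) mem_Collect_eq not_le subsetI finite_subset)

lemma ex_rank: "\<exists>x\<in>S. rank S x = k"
proof (induction k)
  case 0
  obtain s where "s \<in> S" using infinite_S by fastforce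
  then obtain m where m: "m \<in> S" "\<forall>z\<in>S. m \<le> z" using ex_least[of S] by blast
  then have "{y\<in>S. y < m} = {}" by force
  then show ?case using m unfolding rank_def by (metis card.empty)
next
  case (Suc k)
  then obtain x where x: "x \<in> S" "rank S x = k" by blast
  obtain u where "u \<in> S" "x < u" using ex_greater by blast
  then obtain m where m: "m \<in> S" "x < m" "\<forall>z\<in>S. x < z \<longrightarrow> m \<le> z"
    using ex_least[of "{y\<in>S. x < y}" u] by auto
  then have "{y\<in>S. y < m} = insert x {y\<in>S. y < x}" using x(1) by force
  then have "rank S m = Suc k" using finite_less x(2) unfolding rank_def by simp
  then show ?case using m(1) by blast
qed

lemma nth_elem_in: "nth_elem S k \<in> S" and rank_nth_elem: "rank S (nth_elem S k) = k"
proof -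
  obtain x where x: "x \<in> S" "rank S x = k" using ex_rank by blast
  have "nth_elem S k = x" unfolding nth_elem_def
    using x inj_on_rank by (intro the_equality) (auto dest: inj_onD)
  then show "nth_elem S k \<in> S" "rank S (nth_elem S k) = k" using x by auto
qed

lemma nth_elem_rank: "x \<in> S \<Longrightarrow> nth_elem S (rank S x) = x"
  using inj_on_rank nth_elem_in rank_nth_elem by (metis inj_onD)

lemma nth_elem_less_iff: "nth_elem S k < nth_elem S l \<longleftrightarrow> k < l"
  by (metis nth_elem_in rank_nth_elem rank_strict_mono rank_mono not_le)

lemma gap_pos: "gap S k > 0"
  unfolding gap_def using nth_elem_less_iff[of k "Suc k"] by simp

lemma nth_elem_Suc_le: "x \<in> S \<Longrightarrow> nth_elem S k < x \<Longrightarrow> nth_elem S (Suc k) \<le> x"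
  by (metis nth_elem_less_iff nth_elem_rank not_le Suc_leI)

lemma card_le_nth_elem: "card {y\<in>S. y \<le> nth_elem S k} = Suc k"
  using card_le_eq_Suc_rank[OF nth_elem_in] rank_nth_elem by simp

lemma gap_bounded_below_under:
  "\<exists>\<delta>>0. \<forall>k. nth_elem S (Suc k) \<le> B \<longrightarrow> \<delta> \<le> gap S k"
proof -
  define n where "n = card {y\<in>S. y \<le> B}"
  have "k < n" if "nth_elem S (Suc k) \<le> B" for k
  proof -
    have "card {y\<in>S. y \<le> nth_elem S (Suc k)} \<le> n"
      unfolding n_def using that by (intro card_mono[OF finite_le]) auto
    then show ?thesis using card_le_nth_elem by simp
  qed
  moreover have "Min (insert 1 (gap S ` {..<n})) > 0" using gap_pos by simp
  ultimately show ?thesis by (intro exI[of _ "Min (insert 1 (gap S ` {..<n}))"]) auto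
qed

lemma gap_at_scaled_point:
  assumes "1 < t" "0 < nth_elem S k" "t * nth_elem S k \<in> S" "t * nth_elem S (Suc k) \<in> S"
  obtains l where "k < l" "Suc l < card {y\<in>S. y \<le> t * nth_elem S (Suc k)}" "gap S l \<le> t * gap S k"
proof
  define l where "l = rank S (t * nth_elem S k)"
  have nth_elem_l: "nth_elem S l = t * nth_elem S k" unfolding l_def using assms(3) by (rule nth_elem_rank)
  show "k < l" using nth_elem_l assms(1,2) nth_elem_less_iff[of k l] by simp
  have "t * nth_elem S k < t * nth_elem S (Suc k)" using assms(1) nth_elem_less_iff[of k "Suc k"] by simp
  then have next_le: "nth_elem S (Suc l) \<le> t * nth_elem S (Suc k)" using nth_elem_l assms(4) nth_elem_Suc_le by metis
  have "card {y\<in>S. y \<le> nth_elem S (Suc l)} \<le> card {y\<in>S. y \<le> t * nth_elem S (Suc k)}"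
    using next_le by (intro card_mono[OF finite_le]) auto
  then show "Suc l < card {y\<in>S. y \<le> t * nth_elem S (Suc k)}" using card_le_nth_elem by simp
  show "gap S l \<le> t * gap S k" using next_le nth_elem_l by (simp add: gap_def right_diff_distrib)
qed

lemma gap_ge_inverse_denominator:
  assumes "b > 0" "\<And>x. x \<in> S \<Longrightarrow> b * x \<in> \<int>"
  shows "1 / b \<le> gap S k"
proof -
  have "b * gap S k \<in> \<int>" unfolding gap_def right_diff_distrib using assms(2) nth_elem_in by simp
  then obtain z where z: "b * gap S k = of_int z" by (elim Ints_cases)
  have "of_int z > (0::'a)" using z assms(1) gap_pos by (metis mult_pos_pos)
  then have "1 \<le> b * gap S k" using z by simp
  then show ?thesis using assms(1) by (simp add: field_simps)
qed

end

section \<open>Order statistics of the gaps\<close>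

lemma sort_nth_le_if_length_filter:
  fixes xs :: "'a :: linorder list"
  assumes "k < length (filter (\<lambda>x. x \<le> c) xs)"
  shows "sort xs ! k \<le> c"
proof (rule ccontr)
  assume "\<not> sort xs ! k \<le> c"
  let ?ys = "sort xs"
  have k: "k < length ?ys" using assms length_filter_le[of _ xs] by (metis length_sort order.strict_trans2)
  have "c < y" if y: "y \<in> set (drop k ?ys)" for y
  proof -
    obtain j where j: "j < length (drop k ?ys)" "drop k ?ys ! j = y"
      using y unfolding in_set_conv_nth by blast
    then have "?ys ! k \<le> y" using k by (auto intro: sorted_nth_mono)
    with \<open>\<not> ?ys ! k \<le> c\<close> show ?thesis by simp
  qed
  then have "filter (\<lambda>x. x \<le> c) (drop k ?ys) = []" by (force simp: filter_empty_conv)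
  then have "length (filter (\<lambda>x. x \<le> c) ?ys) \<le> k"
    using filter_append[of _ "take k ?ys" "drop k ?ys"] length_filter_le[of _ "take k ?ys"]
    by (metis append_Nil2 append_take_drop_id length_take min.bounded_iff)
  then have "length (filter (\<lambda>x. x \<le> c) xs) \<le> k" by (simp add: filter_sort)
  with assms show False by simp
qed

lemma sort_map_nth_1_le:
  fixes f :: "nat \<Rightarrow> 'a :: linorder"
  assumes "k \<noteq> l" "k < n" "l < n" "f k \<le> c" "f l \<le> c"
  shows "sort (map f [0..<n]) ! 1 \<le> c"
proof (rule sort_nth_le_if_length_filter)
  have "card {k, l} \<le> card {i\<in>{0..<n}. f i \<le> c}"
    using assms by (intro card_mono) auto
  also have "\<dots> = length (filter (\<lambda>x. x \<le> c) (map f [0..<n]))"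
    by (simp add: filter_map o_def distinct_card[symmetric])
  finally show "1 < length (filter (\<lambda>x. x \<le> c) (map f [0..<n]))" using assms(1) by simp
qed

lemma sort_map_nth_0_in:
  assumes "0 < n"
  shows "\<exists>k<n. sort (map f [0..<n]) ! 0 = f k"
proof -
  have "sort (map f [0..<n]) ! 0 \<in> set (map f [0..<n])"
    using assms by (metis nth_mem length_sort length_map length_upt minus_nat.diff_0 set_sort)
  then show ?thesis by auto
qed

lemma lam_eq_nth_elem: "lam \<alpha> i = nth_elem (spec_vals \<alpha>) (i - 1)"
  by (simp add: lam_def nth_elem_def rank_def)

lemma delta_min_eq_sort_gaps:
  "delta_min \<alpha> j N = sort (map (gap (spec_vals \<alpha>)) [0..<N - 1]) ! (j - 1)"
proof -
  have "[1..<N] = map Suc [0..<N - 1]" by (cases N) (simp_all add: map_Suc_upt)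
  then have "map (\<lambda>i. lam \<alpha> (Suc i) - lam \<alpha> i) [1..<N] = map (gap (spec_vals \<alpha>)) [0..<N - 1]"
    by (simp add: lam_eq_nth_elem gap_def)
  then show ?thesis unfolding delta_min_def by simp
qed

section \<open>The values \<open>\<alpha>m\<^sup>2 + n\<^sup>2\<close> and lattice points\<close>

lemma spec_vals_pos: "0 < \<alpha> \<Longrightarrow> v \<in> spec_vals \<alpha> \<Longrightarrow> 0 < v"
  unfolding spec_vals_def by (auto intro!: add_nonneg_pos)

lemma square_mult_mem_spec_vals:
  assumes "v \<in> spec_vals \<alpha>" "1 \<le> k"
  shows "real k ^ 2 * v \<in> spec_vals \<alpha>"
proof -
  obtain m n :: nat where "v = \<alpha> * (real m)\<^sup>2 + (real n)\<^sup>2" "1 \<le> m" "1 \<le> n"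
    using assms(1) unfolding spec_vals_def by blast
  then have "real k ^ 2 * v = \<alpha> * (real (k * m))\<^sup>2 + (real (k * n))\<^sup>2 \<and> 1 \<le> k * m \<and> 1 \<le> k * n"
    using assms(2) by (simp add: power_mult_distrib algebra_simps)
  then show ?thesis unfolding spec_vals_def by blast
qed

lemma spec_vals_scaled_by_denominator:
  assumes "\<alpha> \<in> \<rat>"
  obtains b :: real where "0 < b" "\<And>v. v \<in> spec_vals \<alpha> \<Longrightarrow> b * v \<in> \<int>"
proof -
  obtain p b :: int where b: "b > 0" and \<alpha>: "\<alpha> = of_int p / of_int b"
    using Rats_cases'[OF assms] by metis
  have "of_int b * v \<in> \<int>" if v_mem: "v \<in> spec_vals \<alpha>" for v
  proof -
    obtain m n :: nat where v: "v = \<alpha> * (real m)\<^sup>2 + (real n)\<^sup>2"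
      using v_mem unfolding spec_vals_def by auto
    have "of_int b * v = of_int (p * int m ^ 2 + b * int n ^ 2)"
      using b unfolding v \<alpha> by (simp add: field_simps)
    then show ?thesis by simp
  qed
  then show ?thesis using b that[of "of_int b"] by simp
qed

definition lattice_pts :: "real \<Rightarrow> real \<Rightarrow> (nat \<times> nat) set" where
  "lattice_pts \<alpha> x = {(m, n). 1 \<le> m \<and> 1 \<le> n \<and> \<alpha> * (real m)\<^sup>2 + (real n)\<^sup>2 \<le> x}"

lemma spec_vals_le_eq_image:
  "{v\<in>spec_vals \<alpha>. v \<le> x} = (\<lambda>(m, n). \<alpha> * (real m)\<^sup>2 + (real n)\<^sup>2) ` lattice_pts \<alpha> x"
  unfolding spec_vals_def lattice_pts_def by force

lemma squares_le_eq: "{n::nat. 1 \<le> n \<and> real n ^ 2 \<le> y} = {1..nat \<lfloor>sqrt y\<rfloor>}"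
proof -
  have iff: "real n ^ 2 \<le> y \<longleftrightarrow> n \<le> nat \<lfloor>sqrt y\<rfloor>" if "1 \<le> n" for n :: nat
  proof
    assume "real n ^ 2 \<le> y"
    then have "real n \<le> sqrt y" using real_le_rsqrt by blast
    then show "n \<le> nat \<lfloor>sqrt y\<rfloor>" by linarith
  next
    assume "n \<le> nat \<lfloor>sqrt y\<rfloor>"
    then have "real n \<le> sqrt y" "1 \<le> sqrt y" using that by linarith+
    then have "real n ^ 2 \<le> (sqrt y)\<^sup>2" by (intro power_mono) simp_all
    then show "real n ^ 2 \<le> y" using \<open>1 \<le> sqrt y\<close> by simp
  qed
  show ?thesis by (rule set_eqI) (simp only: mem_Collect_eq atLeastAtMost_iff, use iff in blast)
qed

lemma card_squares_le: "0 \<le> y \<Longrightarrow> real (card {n::nat. 1 \<le> n \<and> real n ^ 2 \<le> y}) \<le> sqrt y"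
  unfolding squares_le_eq by simp

lemma card_squares_gt: "sqrt y - 1 < real (card {n::nat. 1 \<le> n \<and> real n ^ 2 \<le> y})"
proof (cases "0 \<le> y")
  case True
  then show ?thesis unfolding squares_le_eq by simp
qed (unfold squares_le_eq, simp)

lemma lattice_pts_subset:
  assumes "0 < \<alpha>"
  shows "lattice_pts \<alpha> x \<subseteq> {m. 1 \<le> m \<and> real m ^ 2 \<le> x / \<alpha>} \<times> {n. 1 \<le> n \<and> real n ^ 2 \<le> x}"
proof
  fix p assume "p \<in> lattice_pts \<alpha> x"
  then obtain m n where p: "p = (m, n)" "1 \<le> m" "1 \<le> n" "\<alpha> * (real m)\<^sup>2 + (real n)\<^sup>2 \<le> x"
    unfolding lattice_pts_def by blast
  moreover have "0 \<le> \<alpha> * (real m)\<^sup>2" "0 \<le> (real n)\<^sup>2" using assms by simp_all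
  ultimately have "\<alpha> * (real m)\<^sup>2 \<le> x" "(real n)\<^sup>2 \<le> x" by linarith+
  then show "p \<in> {m. 1 \<le> m \<and> real m ^ 2 \<le> x / \<alpha>} \<times> {n. 1 \<le> n \<and> real n ^ 2 \<le> x}"
    using assms p by (simp add: field_simps)
qed

lemma finite_lattice_pts: "0 < \<alpha> \<Longrightarrow> finite (lattice_pts \<alpha> x)"
  by (metis finite_SigmaI finite_atLeastAtMost finite_subset lattice_pts_subset squares_le_eq)

lemma lower_finite_spec_vals:
  assumes "0 < \<alpha>"
  shows "lower_finite (spec_vals \<alpha>)"
proof
  show "finite {y \<in> spec_vals \<alpha>. y \<le> x}" for x
    unfolding spec_vals_le_eq_image using finite_lattice_pts[OF assms] by simp
  have "\<alpha> + (real (Suc n))\<^sup>2 \<in> spec_vals \<alpha>" for n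
    unfolding spec_vals_def by (rule CollectI, rule exI[of _ 1], rule exI[of _ "Suc n"]) simp
  then have "range (\<lambda>n::nat. \<alpha> + (real (Suc n))\<^sup>2) \<subseteq> spec_vals \<alpha>" by auto
  moreover have "inj (\<lambda>n::nat. \<alpha> + (real (Suc n))\<^sup>2)" by (auto simp: inj_def)
  ultimately show "infinite (spec_vals \<alpha>)" by (meson finite_imageD finite_subset infinite_UNIV_nat)
qed

lemma inj_quadratic_form_irrational:
  assumes "\<alpha> \<notin> \<rat>"
  shows "inj (\<lambda>(m::nat, n::nat). \<alpha> * (real m)\<^sup>2 + (real n)\<^sup>2)"
proof (rule injI, clarify)
  fix m n m' n' :: nat
  assume "\<alpha> * (real m)\<^sup>2 + (real n)\<^sup>2 = \<alpha> * (real m')\<^sup>2 + (real n')\<^sup>2"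
  then have eq: "\<alpha> * ((real m)\<^sup>2 - (real m')\<^sup>2) = (real n')\<^sup>2 - (real n)\<^sup>2" by (simp add: algebra_simps)
  have "m = m'"
  proof (rule ccontr)
    assume "m \<noteq> m'"
    then have "\<alpha> = ((real n')\<^sup>2 - (real n)\<^sup>2) / ((real m)\<^sup>2 - (real m')\<^sup>2)"
      using eq by (simp add: field_simps)
    also have "\<dots> \<in> \<rat>" by (intro Rats_divide Rats_diff Rats_power) simp_all
    finally show False using assms by simp
  qed
  then show "m = m' \<and> n = n'" using eq by simp
qed

lemma card_spec_vals_le_irrational:
  assumes "\<alpha> \<notin> \<rat>"
  shows "card {v\<in>spec_vals \<alpha>. v \<le> x} = card (lattice_pts \<alpha> x)"
  unfolding spec_vals_le_eq_image
  by (rule card_image, rule inj_on_subset[OF inj_quadratic_form_irrational[OF assms] subset_UNIV])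

lemma card_lattice_pts_interior_le:
  assumes "0 < \<alpha>"
  shows "card {p\<in>lattice_pts \<alpha> (4 * X). 2 \<le> fst p \<and> 2 \<le> snd p} \<le> 4 * card (lattice_pts \<alpha> X)"
proof -
  define f where "f = (\<lambda>((a::nat, b::nat), (s::nat, t::nat)). (2 * a + s, 2 * b + t))"
  let ?D = "lattice_pts \<alpha> X \<times> ({0::nat, 1} \<times> {0::nat, 1})"
  have "{p\<in>lattice_pts \<alpha> (4 * X). 2 \<le> fst p \<and> 2 \<le> snd p} \<subseteq> f ` ?D"
  proof
    fix p assume "p \<in> {p\<in>lattice_pts \<alpha> (4 * X). 2 \<le> fst p \<and> 2 \<le> snd p}"
    then obtain m n where p: "p = (m, n)" and mn: "(m, n) \<in> lattice_pts \<alpha> (4 * X)" "2 \<le> m" "2 \<le> n"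
      by (cases p) auto
    have "real (m div 2) \<le> real m / 2" "real (n div 2) \<le> real n / 2" by linarith+
    then have "\<alpha> * (real (m div 2))\<^sup>2 + (real (n div 2))\<^sup>2 \<le> \<alpha> * (real m / 2)\<^sup>2 + (real n / 2)\<^sup>2"
      using assms by (intro add_mono mult_left_mono power_mono) auto
    also have "\<dots> = (\<alpha> * (real m)\<^sup>2 + (real n)\<^sup>2) / 4" by (simp add: power_divide field_simps)
    also have "\<dots> \<le> X" using mn(1) unfolding lattice_pts_def by simp
    finally have "(m div 2, n div 2) \<in> lattice_pts \<alpha> X" using mn(2,3) unfolding lattice_pts_def by auto
    then have "((m div 2, n div 2), (m mod 2, n mod 2)) \<in> ?D" by auto
    moreover have "(m, n) = f ((m div 2, n div 2), (m mod 2, n mod 2))" unfolding f_def by simp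
    ultimately show "p \<in> f ` ?D" unfolding p by (rule rev_image_eqI)
  qed
  then have "card {p\<in>lattice_pts \<alpha> (4 * X). 2 \<le> fst p \<and> 2 \<le> snd p} \<le> card (f ` ?D)"
    using finite_lattice_pts[OF assms] by (intro card_mono) auto
  also have "\<dots> \<le> card ?D" by (rule card_image_le) (use finite_lattice_pts[OF assms] in auto)
  also have "\<dots> = 4 * card (lattice_pts \<alpha> X)" by (simp add: card_cartesian_product)
  finally show ?thesis .
qed

lemma card_lattice_pts_first_row_le:
  assumes "0 \<le> \<alpha>" "0 \<le> x"
  shows "real (card {p\<in>lattice_pts \<alpha> x. fst p = 1}) \<le> sqrt x"
proof -
  let ?Q = "{n::nat. 1 \<le> n \<and> real n ^ 2 \<le> x}"
  have "{p\<in>lattice_pts \<alpha> x. fst p = 1} \<subseteq> Pair (1::nat) ` ?Q"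
    using assms(1) by (auto simp: lattice_pts_def)
  then have "card {p\<in>lattice_pts \<alpha> x. fst p = 1} \<le> card (Pair (1::nat) ` ?Q)"
    by (rule card_mono[OF finite_imageI, rotated]) (simp only: squares_le_eq finite_atLeastAtMost)
  also have "\<dots> = card ?Q" by (rule card_image) (simp add: inj_on_def)
  finally show ?thesis using card_squares_le[OF assms(2)] by linarith
qed

lemma card_lattice_pts_first_column_le:
  assumes "0 < \<alpha>" "0 \<le> x"
  shows "real (card {p\<in>lattice_pts \<alpha> x. snd p = 1}) \<le> sqrt (x / \<alpha>)"
proof -
  let ?Q = "{m::nat. 1 \<le> m \<and> real m ^ 2 \<le> x / \<alpha>}"
  have "{p\<in>lattice_pts \<alpha> x. snd p = 1} \<subseteq> (\<lambda>m. (m, 1::nat)) ` ?Q"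
    using assms(1) by (auto simp: lattice_pts_def field_simps)
  then have "card {p\<in>lattice_pts \<alpha> x. snd p = 1} \<le> card ((\<lambda>m. (m, 1::nat)) ` ?Q)"
    by (rule card_mono[OF finite_imageI, rotated]) (simp only: squares_le_eq finite_atLeastAtMost)
  also have "\<dots> = card ?Q" by (rule card_image) (simp add: inj_on_def)
  finally show ?thesis using card_squares_le[of "x / \<alpha>"] assms by simp
qed

lemma sqrt_le_card_lattice_pts:
  assumes "0 < \<alpha>" "16 \<le> X" "2 * \<alpha> \<le> X"
  shows "sqrt X \<le> 4 * real (card (lattice_pts \<alpha> X))"
proof -
  let ?Q = "{n::nat. 1 \<le> n \<and> real n ^ 2 \<le> X - \<alpha>}"
  have "Pair (1::nat) ` ?Q \<subseteq> lattice_pts \<alpha> X" unfolding lattice_pts_def by auto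
  then have "card (Pair (1::nat) ` ?Q) \<le> card (lattice_pts \<alpha> X)"
    using finite_lattice_pts[OF assms(1)] by (rule card_mono[rotated])
  moreover have "card (Pair (1::nat) ` ?Q) = card ?Q" by (rule card_image) (simp add: inj_on_def)
  ultimately have "sqrt (X - \<alpha>) - 1 < real (card (lattice_pts \<alpha> X))"
    using card_squares_gt[of "X - \<alpha>"] by linarith
  moreover have "sqrt X / 4 + 1 \<le> sqrt (X - \<alpha>)"
  proof (rule real_le_rsqrt)
    have "4 \<le> sqrt X" using assms(2) real_sqrt_le_mono[of 16 X] by simp
    then have "4 * sqrt X \<le> sqrt X * sqrt X" using assms(2) by (intro mult_right_mono) auto
    then have "4 * sqrt X \<le> X" using assms(2) by simp
    then show "(sqrt X / 4 + 1)\<^sup>2 \<le> X - \<alpha>"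
      using assms by (simp add: power2_eq_square field_simps)
  qed
  ultimately show ?thesis by linarith
qed

lemma card_spec_vals_le_quadruple:
  assumes "0 < \<alpha>" "\<alpha> \<notin> \<rat>" "16 \<le> X" "2 * \<alpha> \<le> X"
  shows "real (card {v\<in>spec_vals \<alpha>. v \<le> 4 * X}) \<le> (12 + 8 / sqrt \<alpha>) * real (card {v\<in>spec_vals \<alpha>. v \<le> X})"
proof -
  let ?P = "lattice_pts \<alpha> (4 * X)"
  let ?I = "{p\<in>?P. 2 \<le> fst p \<and> 2 \<le> snd p}" and ?R = "{p\<in>?P. fst p = 1}" and ?C = "{p\<in>?P. snd p = 1}"
  have cover: "?P \<subseteq> ?I \<union> ?R \<union> ?C" unfolding lattice_pts_def by auto
  have "card {v\<in>spec_vals \<alpha>. v \<le> 4 * X} \<le> card ?P"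
    unfolding spec_vals_le_eq_image by (rule card_image_le[OF finite_lattice_pts[OF assms(1)]])
  also have "card ?P \<le> card (?I \<union> ?R \<union> ?C)"
    using cover by (rule card_mono[rotated]) (use finite_lattice_pts[OF assms(1)] in auto)
  also have "\<dots> \<le> card ?I + card ?R + card ?C"
    using card_Un_le[of "?I \<union> ?R" ?C] card_Un_le[of ?I ?R] by linarith
  finally have "real (card {v\<in>spec_vals \<alpha>. v \<le> 4 * X}) \<le> card ?I + card ?R + card ?C" by simp
  also have "\<dots> \<le> 4 * card (lattice_pts \<alpha> X) + sqrt (4 * X) + sqrt (4 * X / \<alpha>)"
    using card_lattice_pts_interior_le[OF assms(1), of X] assms
      card_lattice_pts_first_row_le[of \<alpha> "4 * X"] card_lattice_pts_first_column_le[of \<alpha> "4 * X"]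
    by linarith
  also have "\<dots> = 4 * card (lattice_pts \<alpha> X) + 2 * sqrt X * (1 + 1 / sqrt \<alpha>)"
    by (simp add: real_sqrt_mult real_sqrt_divide field_simps)
  also have "\<dots> \<le> 4 * card (lattice_pts \<alpha> X) + 2 * (4 * card (lattice_pts \<alpha> X)) * (1 + 1 / sqrt \<alpha>)"
    using sqrt_le_card_lattice_pts[OF assms(1,3,4)] assms(1) by (intro add_left_mono mult_right_mono) auto
  also have "\<dots> = (12 + 8 / sqrt \<alpha>) * card {v\<in>spec_vals \<alpha>. v \<le> X}"
    unfolding card_spec_vals_le_irrational[OF assms(2)] by (simp add: algebra_simps)
  finally show ?thesis .
qed

section \<open>Small gaps\<close>

lemma delta_min_1_ge_if_rational:
  assumes "0 < \<alpha>" "\<alpha> \<in> \<rat>"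
  obtains q :: real where "0 < q" "\<And>N. 2 \<le> N \<Longrightarrow> q \<le> delta_min \<alpha> 1 N"
proof -
  interpret lower_finite "spec_vals \<alpha>" using lower_finite_spec_vals[OF assms(1)] .
  obtain b where b: "0 < b" "\<And>v. v \<in> spec_vals \<alpha> \<Longrightarrow> b * v \<in> \<int>"
    using spec_vals_scaled_by_denominator[OF assms(2)] by blast
  have "1 / b \<le> delta_min \<alpha> 1 N" if N: "2 \<le> N" for N
  proof -
    obtain k where "delta_min \<alpha> 1 N = gap (spec_vals \<alpha>) k"
      using sort_map_nth_0_in[of "N - 1" "gap (spec_vals \<alpha>)"] N
      unfolding delta_min_eq_sort_gaps by force
    then show ?thesis using gap_ge_inverse_denominator[OF b] by simp
  qed
  then show ?thesis using that[of "1 / b"] b(1) by simp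
qed

lemma delta_min_2_le_scaled_gap:
  assumes "0 < \<alpha>"
  shows "delta_min \<alpha> 2 (Suc (card {v\<in>spec_vals \<alpha>. v \<le> 4 * nth_elem (spec_vals \<alpha>) (Suc k)}))
           \<le> 4 * gap (spec_vals \<alpha>) k"
proof -
  interpret lower_finite "spec_vals \<alpha>" using lower_finite_spec_vals[OF assms] .
  have "4 * v \<in> spec_vals \<alpha>" if "v \<in> spec_vals \<alpha>" for v
    using square_mult_mem_spec_vals[OF that, of 2] by simp
  then obtain l where l: "k < l" "Suc l < card {v\<in>spec_vals \<alpha>. v \<le> 4 * nth_elem (spec_vals \<alpha>) (Suc k)}"
    "gap (spec_vals \<alpha>) l \<le> 4 * gap (spec_vals \<alpha>) k"
    using gap_at_scaled_point[of 4 k] spec_vals_pos[OF assms] nth_elem_in by auto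
  have "sort (map (gap (spec_vals \<alpha>)) [0..<card {v\<in>spec_vals \<alpha>. v \<le> 4 * nth_elem (spec_vals \<alpha>) (Suc k)}]) ! 1
          \<le> 4 * gap (spec_vals \<alpha>) k"
    using l gap_pos[of k] by (intro sort_map_nth_1_le[of k l]) auto
  then show ?thesis unfolding delta_min_eq_sort_gaps by simp
qed

lemma small_delta_min_1_forces_small_delta_min_2:
  assumes "0 < \<alpha>" "\<alpha> \<notin> \<rat>"
  obtains \<delta> c :: real where "0 < \<delta>" "1 \<le> c"
    "\<And>N. 2 \<le> N \<Longrightarrow> delta_min \<alpha> 1 N < \<delta> \<Longrightarrow>
       \<exists>N'. M \<le> N' \<and> 3 \<le> N' \<and> real N' \<le> c * real N \<and> delta_min \<alpha> 2 N' \<le> 4 * delta_min \<alpha> 1 N"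
proof -
  let ?S = "spec_vals \<alpha>"
  interpret lower_finite ?S using lower_finite_spec_vals[OF assms(1)] .
  \<comment> \<open>Gaps shorter than \<open>\<delta>\<close> end above \<open>B\<close>: past index \<open>M\<close> and within the range of the doubling estimate.\<close>
  define B where "B = max (max 16 (2 * \<alpha>)) (nth_elem ?S M)"
  obtain \<delta> where \<delta>: "0 < \<delta>" "\<And>k. nth_elem ?S (Suc k) \<le> B \<Longrightarrow> \<delta> \<le> gap ?S k"
    using gap_bounded_below_under[of B] by blast
  define c where "c = 13 + 8 / sqrt \<alpha>"
  have "\<exists>N'. M \<le> N' \<and> 3 \<le> N' \<and> real N' \<le> c * real N \<and> delta_min \<alpha> 2 N' \<le> 4 * delta_min \<alpha> 1 N"
    if N: "2 \<le> N" "delta_min \<alpha> 1 N < \<delta>" for N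
  proof -
    obtain k where k: "k < N - 1" "delta_min \<alpha> 1 N = gap ?S k"
      using sort_map_nth_0_in[of "N - 1" "gap ?S"] N(1) unfolding delta_min_eq_sort_gaps by force
    define b where "b = nth_elem ?S (Suc k)"
    define N' where "N' = Suc (card {v\<in>?S. v \<le> 4 * b})"
    have "B < b" using \<delta>(2)[of k] N(2) k(2) unfolding b_def by force
    then have "M < Suc k" using nth_elem_less_iff unfolding B_def b_def by (metis max.strict_boundedE)
    have card_b: "card {v\<in>?S. v \<le> b} = Suc (Suc k)" unfolding b_def by (rule card_le_nth_elem)
    have "0 < b" unfolding b_def by (rule spec_vals_pos[OF assms(1) nth_elem_in])
    then have "card {v\<in>?S. v \<le> b} \<le> card {v\<in>?S. v \<le> 4 * b}"
      by (intro card_mono[OF finite_le]) auto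
    then have "M \<le> N'" "3 \<le> N'" using card_b \<open>M < Suc k\<close> unfolding N'_def by linarith+
    have "16 \<le> b" "2 * \<alpha> \<le> b" using \<open>B < b\<close> unfolding B_def by auto
    then have "real (card {v\<in>?S. v \<le> 4 * b}) \<le> (12 + 8 / sqrt \<alpha>) * real (card {v\<in>?S. v \<le> b})"
      by (rule card_spec_vals_le_quadruple[OF assms])
    also have "\<dots> \<le> (12 + 8 / sqrt \<alpha>) * real N"
      using card_b k(1) assms(1) by (intro mult_left_mono) auto
    finally have "real N' \<le> 1 + (12 + 8 / sqrt \<alpha>) * real N" unfolding N'_def by simp
    then have "real N' \<le> c * real N" using N(1) unfolding c_def by (simp add: ring_distribs)
    moreover have "delta_min \<alpha> 2 N' \<le> 4 * delta_min \<alpha> 1 N"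
      unfolding N'_def b_def k(2) by (rule delta_min_2_le_scaled_gap[OF assms(1)])
    ultimately show ?thesis using \<open>M \<le> N'\<close> \<open>3 \<le> N'\<close> by blast
  qed
  moreover have "1 \<le> c" unfolding c_def using assms(1) by simp
  ultimately show ?thesis using that \<delta>(1) by blast
qed

lemma eventually_ln_beats_ln_powr:
  "1 \<le> c \<Longrightarrow> \<forall>\<^sub>F x in at_top. 4 * c * ln (c * x) powr (2/3) < ln (x::real)"
  by real_asymp

lemma eventually_NlnN_dominates:
  assumes "1 \<le> c"
  shows "\<forall>\<^sub>F N in sequentially. \<forall>N'::nat. 3 \<le> N' \<longrightarrow> real N' \<le> c * real N \<longrightarrow>
           4 / (real N * ln (real N)) < 1 / (real N' * ln (real N') powr (2/3))"
proof -
  have "\<forall>\<^sub>F N in sequentially. 4 * c * ln (c * real N) powr (2/3) < ln (real N) \<and> 3 \<le> N"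
    using eventually_compose_filterlim[OF eventually_ln_beats_ln_powr[OF assms] filterlim_real_sequentially]
      eventually_ge_at_top[of 3] by (rule eventually_conj)
  then show ?thesis
  proof (rule eventually_mono, intro allI impI)
    fix N N' :: nat
    assume N: "4 * c * ln (c * real N) powr (2/3) < ln (real N) \<and> 3 \<le> N" and N': "3 \<le> N'" "real N' \<le> c * real N"
    have "ln (real N') \<le> ln (c * real N)" using N' by simp
    then have "real N' * ln (real N') powr (2/3) \<le> c * real N * ln (c * real N) powr (2/3)"
      using N' by (intro mult_mono powr_mono2) auto
    also have "\<dots> < real N * ln (real N) / 4"
      using N by (simp add: field_simps)
    finally show "4 / (real N * ln (real N)) < 1 / (real N' * ln (real N') powr (2/3))"
      using N N' by (simp add: field_simps)
  qed
qed

lemma tendsto_inverse_NlnN: "(\<lambda>N::nat. 1 / (real N * ln (real N))) \<longlonglongrightarrow> 0"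
  by real_asymp

lemma frequently_small_delta_min_1_fails_if_rational:
  assumes "0 < \<alpha>" "\<alpha> \<in> \<rat>"
  shows "\<not> (\<exists>\<^sub>F N in sequentially. N \<ge> 3 \<and> delta_min \<alpha> 1 N \<le> 1 / (real N * ln (real N)))"
proof
  assume A: "\<exists>\<^sub>F N in sequentially. N \<ge> 3 \<and> delta_min \<alpha> 1 N \<le> 1 / (real N * ln (real N))"
  obtain q where q: "0 < q" "\<And>N. 2 \<le> N \<Longrightarrow> q \<le> delta_min \<alpha> 1 N"
    using delta_min_1_ge_if_rational[OF assms] by blast
  have "\<forall>\<^sub>F N in sequentially. 1 / (real N * ln (real N)) < q"
    using order_tendstoD(2)[OF tendsto_inverse_NlnN q(1)] .
  then obtain N where "3 \<le> N" "delta_min \<alpha> 1 N \<le> 1 / (real N * ln (real N))"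
    "1 / (real N * ln (real N)) < q"
    using frequently_ex[OF frequently_eventually_frequently[OF A]] by blast
  with q(2)[of N] show False by simp
qed

lemma eventually_large_delta_min_2_fails_if_irrational:
  assumes "0 < \<alpha>" "\<alpha> \<notin> \<rat>"
    and A: "\<exists>\<^sub>F N in sequentially. N \<ge> 3 \<and> delta_min \<alpha> 1 N \<le> 1 / (real N * ln (real N))"
  shows "\<not> (\<forall>\<^sub>F N in sequentially. delta_min \<alpha> 2 N \<ge> 1 / (real N * ln (real N) powr (2/3)))"
proof
  assume "\<forall>\<^sub>F N in sequentially. delta_min \<alpha> 2 N \<ge> 1 / (real N * ln (real N) powr (2/3))"
  then obtain M where M: "\<And>N. M \<le> N \<Longrightarrow> 1 / (real N * ln (real N) powr (2/3)) \<le> delta_min \<alpha> 2 N"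
    unfolding eventually_sequentially by blast
  obtain \<delta> c where \<delta>c: "0 < \<delta>" "1 \<le> c" "\<And>N. 2 \<le> N \<Longrightarrow> delta_min \<alpha> 1 N < \<delta> \<Longrightarrow>
     \<exists>N'. M \<le> N' \<and> 3 \<le> N' \<and> real N' \<le> c * real N \<and> delta_min \<alpha> 2 N' \<le> 4 * delta_min \<alpha> 1 N"
    using small_delta_min_1_forces_small_delta_min_2[OF assms(1,2)] by blast
  have "\<forall>\<^sub>F N in sequentially. 1 / (real N * ln (real N)) < \<delta> \<and> (\<forall>N'::nat. 3 \<le> N' \<longrightarrow>
          real N' \<le> c * real N \<longrightarrow> 4 / (real N * ln (real N)) < 1 / (real N' * ln (real N') powr (2/3)))"
    using order_tendstoD(2)[OF tendsto_inverse_NlnN \<delta>c(1)] eventually_NlnN_dominates[OF \<delta>c(2)]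
    by (rule eventually_conj)
  then obtain N where N: "3 \<le> N" "delta_min \<alpha> 1 N \<le> 1 / (real N * ln (real N))"
    "1 / (real N * ln (real N)) < \<delta>" "\<And>N'. 3 \<le> N' \<Longrightarrow> real N' \<le> c * real N \<Longrightarrow>
      4 / (real N * ln (real N)) < 1 / (real N' * ln (real N') powr (2/3))"
    using frequently_ex[OF frequently_eventually_frequently[OF A]] by blast
  then obtain N' where N': "M \<le> N'" "3 \<le> N'" "real N' \<le> c * real N"
    "delta_min \<alpha> 2 N' \<le> 4 * delta_min \<alpha> 1 N"
    using \<delta>c(3)[of N] by fastforce
  have "1 / (real N' * ln (real N') powr (2/3)) \<le> 4 / (real N * ln (real N))"
    using M[OF N'(1)] N'(4) N(2) by simp
  with N(4)[OF N'(2,3)] show False by simp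
qed

theorem theorem1p4:
  fixes \<alpha> :: real
  assumes "\<alpha> > 0"
  shows "\<not> ((\<exists>\<^sub>F N in sequentially. N \<ge> 3 \<and>
               delta_min \<alpha> 1 N \<le> 1 / (real N * ln (real N)))
          \<and> (\<forall>\<^sub>F N in sequentially.
               delta_min \<alpha> 2 N \<ge> 1 / (real N * ln (real N) powr (2/3))))"
proof (cases "\<alpha> \<in> \<rat>")
  case True
  then show ?thesis using frequently_small_delta_min_1_fails_if_rational[OF assms] by blast
next
  case False
  then show ?thesis using eventually_large_delta_min_2_fails_if_irrational[OF assms] by blast
qed

end
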